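(* Let $M_0$ be a smooth spacelike entire graph over $\mathbb{R}^n$ in $\mathbb{R}^{n,m}$ with $\sup_{M_0}v^2\le C_v$ and $\sup_{M_0}\|H\|^2<C_H$, and let $M_t$ be a tame solution of entire graphical spacelike mean curvature flow starting at $M_0$. Then every expanding quasi-sphere acts as an outer barrier: for any $p\in\mathbb{R}^{n,m}$ and $R>0$, if $M_0\subset I_0$ then $M_t\subset I_t$ for all $t\ge0$, where $I_t=\{x\in\mathbb{R}^{n,m}:|p-x|^2\ge-R^2-2nt\}$.
   Context: $\mathbb{R}^{n,m}$ has quadratic form $\langle x,y\rangle=\sum_{i\le n}x^iy^i-\sum_{A\le m}x^{n+A}y^{n+A}$, $|x|^2=\langle x,x\rangle$ (possibly negative), timelike basis $e_1,\dots,e_m$. Entire graphical spacelike MCF: $M_t$ graph of $\hat u(\cdot,t)$ with $\partial_t\hat u-g^{ij}(D\hat u)D^2_{ij}\hat u=0$, $g_{ij}=\delta_{ij}-\sum_AD_i\hat u^AD_j\hat u^A$ positive definite. For normal vectors $z$, $\|z\|^2=-|z|^2$; $H$ the mean curvature vector; $v^2=\sum_A\|e_A^\perp\|^2$. Tame: there is a continuous $f$ on $[0,\infty)$ with $f(0)=C_H$ and $\sup_{M_t}\|H\|^2\le f(t)$. The set $S_t=\{|p-x|^2=-R^2-2nt\}$ is the quasi-sphere expander, $I_t$ its inside. *)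

theory Defs
  imports "HOL-Analysis.Analysis"
begin

text \<open>Points of the pseudo-Euclidean space R^{n,m} are pairs (x, y) with x in R^n
(spacelike directions) and y in R^m (timelike directions e_1..e_m).\<close>

type_synonym ('n, 'm) pspace = "(real^'n) \<times> (real^'m)"

definition qf :: "('n::finite, 'm::finite) pspace \<Rightarrow> ('n, 'm) pspace \<Rightarrow> real" where
  "qf z w = fst z \<bullet> fst w - snd z \<bullet> snd w"

definition sqn :: "('n::finite, 'm::finite) pspace \<Rightarrow> real" where
  "sqn z = qf z z"

text \<open>For normal vectors z: norm squared is minus the quadratic form.\<close>
definition nnorm2 :: "('n::finite, 'm::finite) pspace \<Rightarrow> real" where
  "nnorm2 z = - sqn z"

fun C_k :: "nat \<Rightarrow> 'a::euclidean_space set \<Rightarrow> ('a \<Rightarrow> 'b::real_normed_vector) \<Rightarrow> bool" where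
  "C_k 0 S f = continuous_on S f"
| "C_k (Suc k) S f = ((\<forall>x\<in>S. f differentiable (at x)) \<and>
      (\<forall>b\<in>Basis. C_k k S (\<lambda>x. frechet_derivative f (at x) b)))"

definition smooth_on :: "'a::euclidean_space set \<Rightarrow> ('a \<Rightarrow> 'b::real_normed_vector) \<Rightarrow> bool" where
  "smooth_on S f \<longleftrightarrow> (\<forall>k. C_k k S f)"

definition pd :: "(real^'n::finite \<Rightarrow> real^'m::finite) \<Rightarrow> 'n \<Rightarrow> real^'n \<Rightarrow> real^'m" where
  "pd u i x = frechet_derivative u (at x) (axis i 1)"

definition pd2 :: "(real^'n::finite \<Rightarrow> real^'m::finite) \<Rightarrow> 'n \<Rightarrow> 'n \<Rightarrow> real^'n \<Rightarrow> real^'m" where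
  "pd2 u i j x = pd (\<lambda>y. pd u j y) i x"

definition gmat :: "(real^'n::finite \<Rightarrow> real^'m::finite) \<Rightarrow> real^'n \<Rightarrow> real^'n^'n" where
  "gmat u x = (\<chi> i j. (if i = j then 1 else 0) - pd u i x \<bullet> pd u j x)"

definition ginv :: "(real^'n::finite \<Rightarrow> real^'m::finite) \<Rightarrow> real^'n \<Rightarrow> real^'n^'n" where
  "ginv u x = matrix_inv (gmat u x)"

definition spacelike_at :: "(real^'n::finite \<Rightarrow> real^'m::finite) \<Rightarrow> real^'n \<Rightarrow> bool" where
  "spacelike_at u x \<longleftrightarrow> (\<forall>\<xi>::real^'n. \<xi> \<noteq> 0 \<longrightarrow> \<xi> \<bullet> (gmat u x *v \<xi>) > 0)"

text \<open>Tangent vectors dF(e_i) = (e_i, D_i u) of the graph F(x) = (x, u x).\<close>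
definition tang :: "(real^'n::finite \<Rightarrow> real^'m::finite) \<Rightarrow> real^'n \<Rightarrow> 'n \<Rightarrow> ('n, 'm) pspace" where
  "tang u x i = (axis i 1, pd u i x)"

text \<open>Normal projection z^perp (w.r.t. the indefinite form) at the point (x, u x).\<close>
definition nproj :: "(real^'n::finite \<Rightarrow> real^'m::finite) \<Rightarrow> real^'n \<Rightarrow> ('n, 'm) pspace \<Rightarrow> ('n, 'm) pspace" where
  "nproj u x z = z - (\<Sum>i\<in>UNIV. \<Sum>j\<in>UNIV. (ginv u x $ i $ j * qf z (tang u x j)) *\<^sub>R tang u x i)"

text \<open>Mean curvature vector H = (g^ij D_ij F)^perp, where D_ij F = (0, D_ij u).\<close>
definition Hvec :: "(real^'n::finite \<Rightarrow> real^'m::finite) \<Rightarrow> real^'n \<Rightarrow> ('n, 'm) pspace" where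
  "Hvec u x = nproj u x (\<Sum>i\<in>UNIV. \<Sum>j\<in>UNIV. ginv u x $ i $ j *\<^sub>R (0, pd2 u i j x))"

definition vsq :: "(real^'n::finite \<Rightarrow> real^'m::finite) \<Rightarrow> real^'n \<Rightarrow> real" where
  "vsq u x = (\<Sum>A\<in>UNIV. nnorm2 (nproj u x (0, axis A 1)))"

definition slice :: "((real^'n::finite) \<times> real \<Rightarrow> real^'m::finite) \<Rightarrow> real \<Rightarrow> real^'n \<Rightarrow> real^'m" where
  "slice U t = (\<lambda>x. U (x, t))"

definition time_deriv :: "((real^'n::finite) \<times> real \<Rightarrow> real^'m::finite) \<Rightarrow> (real^'n) \<times> real \<Rightarrow> real^'m" where
  "time_deriv U p = frechet_derivative U (at p) (0, 1)"

definition spacelike_entire_graph :: "(real^'n::finite \<Rightarrow> real^'m::finite) \<Rightarrow> bool" where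
  "spacelike_entire_graph u \<longleftrightarrow> smooth_on UNIV u \<and> (\<forall>x. spacelike_at u x)"

definition graphical_smcf :: "((real^'n::finite) \<times> real \<Rightarrow> real^'m::finite) \<Rightarrow> (real^'n \<Rightarrow> real^'m) \<Rightarrow> bool" where
  "graphical_smcf U u0 \<longleftrightarrow>
     smooth_on (UNIV \<times> {0<..}) U \<and> continuous_on (UNIV \<times> {0..}) U \<and>
     (\<forall>x. U (x, 0) = u0 x) \<and>
     (\<forall>t>0. \<forall>x. spacelike_at (slice U t) x \<and>
        time_deriv U (x, t) = (\<Sum>i\<in>UNIV. \<Sum>j\<in>UNIV. ginv (slice U t) x $ i $ j *\<^sub>R pd2 (slice U t) i j x))"

definition tame :: "((real^'n::finite) \<times> real \<Rightarrow> real^'m::finite) \<Rightarrow> real \<Rightarrow> bool" where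
  "tame U C_H \<longleftrightarrow> (\<exists>f::real \<Rightarrow> real. continuous_on {0..} f \<and> f 0 = C_H \<and>
      (\<forall>t\<ge>0. \<forall>x. nnorm2 (Hvec (slice U t) x) \<le> f t))"

definition qs_inside :: "('n::finite, 'm::finite) pspace \<Rightarrow> real \<Rightarrow> real \<Rightarrow> ('n, 'm) pspace set" where
  "qs_inside p R t = {z. sqn (p - z) \<ge> - R\<^sup>2 - 2 * real CARD('n) * t}"

definition graph_at :: "((real^'n::finite) \<times> real \<Rightarrow> real^'m::finite) \<Rightarrow> real \<Rightarrow> ('n, 'm) pspace set" where
  "graph_at U t = {(x, U (x, t)) | x. True}"

end

theory Submission
  imports Defs
begin

text \<open>
  Write F(x,t) = (x, u(x,t)) and, for p = (a,b), let phi(x,t) = |p - F(x,t)|^2 + 2 n t, so that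
  the graph lies in I_t exactly where phi >= -R^2. At a spatial minimum of phi the second variation
  in every direction shows that g_ij + <b - u, D_ij u> is positive semidefinite; its trace against
  the positive definite g^ij is, by the flow equation, n + <b - u, d_t u>, so d_t phi >= 0 there.
  Two global facts make this local principle usable on a noncompact graph: v^2 <= C_v makes Du a
  strict contraction, so u_0 is Lipschitz with constant theta < 1, and |d_t u|^2 <= ||H||^2
  together with tameness bounds how far u(., t) moves from u_0 on bounded time intervals. Hence
  phi >= 0 outside a compact set, and a first violation of phi >= -R^2 would give a minimum of
  phi + eps t at a positive time, where the time derivative is at least eps > 0.
\<close>

section \<open>Positive semidefinite matrices\<close>

lemma nonneg_quadratic_discriminant:
  fixes a b c :: real
  assumes nonneg: "\<And>t. 0 \<le> a * t\<^sup>2 + 2 * b * t + c"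
  shows "b\<^sup>2 \<le> a * c"
proof (cases "a = 0")
  case True
  have "b = 0"
  proof (rule ccontr)
    assume "b \<noteq> 0"
    then show False
      using nonneg[of "- (c + 1) / (2 * b)"] True by (simp add: field_simps)
  qed
  then show ?thesis using True by simp
next
  case False
  have "0 < a"
  proof (rule ccontr)
    assume "\<not> 0 < a"
    then have a: "a < 0" using False by simp
    define t where "t = sqrt ((\<bar>c\<bar> + 1) / - a)"
    have "t\<^sup>2 = (\<bar>c\<bar> + 1) / - a" unfolding t_def using a by (simp add: divide_nonneg_neg)
    then have "a * t\<^sup>2 = - (\<bar>c\<bar> + 1)" using a by simp
    then show False using nonneg[of t] nonneg[of "- t"] by simp
  qed
  have "0 \<le> a * (- b / a)\<^sup>2 + 2 * b * (- b / a) + c" by (rule nonneg)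
  also have "\<dots> = c - b\<^sup>2 / a" using False by (simp add: field_simps power2_eq_square)
  finally show ?thesis using \<open>0 < a\<close> by (simp add: field_simps)
qed

definition psd_matrix :: "real^'n^'n \<Rightarrow> bool" where
  "psd_matrix A \<longleftrightarrow> transpose A = A \<and> (\<forall>x. 0 \<le> x \<bullet> (A *v x))"

lemma symmetric_matrix_inner_commute:
  fixes A :: "real^'n^'n"
  assumes "transpose A = A"
  shows "y \<bullet> (A *v x) = x \<bullet> (A *v y)"
  by (metis assms dot_lmul_matrix inner_commute transpose_matrix_vector)

lemma inner_matrix_vector_eq_sum: "w \<bullet> (M *v w) = (\<Sum>i\<in>UNIV. \<Sum>k\<in>UNIV. w $ i * M $ i $ k * w $ k)"
  by (simp add: inner_vec_def matrix_vector_mult_def sum_distrib_left mult.assoc)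

lemma inner_axis_matrix_axis:
  fixes A :: "real^'n^'n"
  shows "axis i 1 \<bullet> (A *v axis k 1) = A $ i $ k"
  by (simp add: matrix_vector_mult_basis column_def inner_axis')

lemma quadratic_form_add:
  fixes A :: "real^'n^'n"
  assumes "transpose A = A"
  shows "(x + t *\<^sub>R y) \<bullet> (A *v (x + t *\<^sub>R y))
       = t\<^sup>2 * (y \<bullet> (A *v y)) + 2 * (x \<bullet> (A *v y)) * t + x \<bullet> (A *v x)"
proof -
  have "A *v (x + t *\<^sub>R y) = A *v x + t *\<^sub>R (A *v y)"
    by (simp add: matrix_vector_right_distrib matrix_vector_mult_scaleR)
  then show ?thesis
    using symmetric_matrix_inner_commute[OF assms, of y x]
    by (simp add: inner_add_left inner_add_right power2_eq_square algebra_simps)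
qed

lemma psd_matrix_cauchy_schwarz:
  assumes "psd_matrix A"
  shows "(x \<bullet> (A *v y))\<^sup>2 \<le> (y \<bullet> (A *v y)) * (x \<bullet> (A *v x))"
proof (rule nonneg_quadratic_discriminant)
  fix t
  have "0 \<le> (x + t *\<^sub>R y) \<bullet> (A *v (x + t *\<^sub>R y))"
    using assms unfolding psd_matrix_def by blast
  then show "0 \<le> (y \<bullet> (A *v y)) * t\<^sup>2 + 2 * (x \<bullet> (A *v y)) * t + x \<bullet> (A *v x)"
    using assms unfolding psd_matrix_def by (simp add: quadratic_form_add mult.commute)
qed

lemma psd_matrix_sym:
  assumes "psd_matrix A"
  shows "A $ i $ j = A $ j $ i"
proof -
  have "transpose A $ j $ i = A $ i $ j" by (simp add: transpose_def)
  then show ?thesis using assms unfolding psd_matrix_def by simp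
qed

lemma psd_matrix_diag_zero_row:
  assumes psd: "psd_matrix A" and "A $ k $ k = 0"
  shows "A $ k $ j = 0"
proof -
  have "(x \<bullet> (A *v axis k 1))\<^sup>2 \<le> 0" for x
    using psd_matrix_cauchy_schwarz[OF psd, of x "axis k 1"] assms(2)
    by (simp add: inner_axis_matrix_axis)
  from this[of "A *v axis k 1"] have "A *v axis k 1 = 0" by simp
  then show ?thesis
    using inner_axis_matrix_axis[of j A k] psd_matrix_sym[OF psd, of j k] by simp
qed

lemma inner_outer_square:
  fixes x w :: "real^'n"
  shows "x \<bullet> ((\<chi> i j. w $ i * w $ j) *v x) = (x \<bullet> w)\<^sup>2"
proof -
  have "x \<bullet> ((\<chi> i j. w $ i * w $ j) *v x) = (\<Sum>i\<in>UNIV. \<Sum>j\<in>UNIV. (x $ i * w $ i) * (w $ j * x $ j))"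
    by (simp add: inner_vec_def matrix_vector_mult_def sum_distrib_left mult.assoc)
  also have "\<dots> = (x \<bullet> w)\<^sup>2"
    by (simp add: inner_vec_def power2_eq_square sum_product mult.commute)
  finally show ?thesis .
qed

lemma psd_matrix_minus_pivot_square:
  fixes A :: "real^'n^'n"
  assumes psd: "psd_matrix A" and pos: "0 < A $ k $ k"
  defines "w \<equiv> (1 / sqrt (A $ k $ k)) *\<^sub>R (A *v axis k 1)"
  shows "w $ i * w $ j = A $ i $ k * A $ k $ j / A $ k $ k"
    and "psd_matrix (A - (\<chi> i j. w $ i * w $ j))"
proof -
  have w: "w $ i = A $ i $ k / sqrt (A $ k $ k)" for i
    unfolding w_def using inner_axis_matrix_axis[of i A k] by (simp add: inner_axis')
  then show ww: "w $ i * w $ j = A $ i $ k * A $ k $ j / A $ k $ k"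
    using pos psd_matrix_sym[OF psd, of j k] by simp
  have "(x \<bullet> w)\<^sup>2 \<le> x \<bullet> (A *v x)" for x
  proof -
    have "(x \<bullet> w)\<^sup>2 = (x \<bullet> (A *v axis k 1))\<^sup>2 / A $ k $ k"
      using pos by (simp add: w_def power_divide)
    also have "\<dots> \<le> x \<bullet> (A *v x)"
      using psd_matrix_cauchy_schwarz[OF psd, of x "axis k 1"] pos
      by (simp add: inner_axis_matrix_axis divide_le_eq mult.commute)
    finally show ?thesis .
  qed
  moreover have "transpose (A - (\<chi> i j. w $ i * w $ j)) = A - (\<chi> i j. w $ i * w $ j)"
    using psd unfolding psd_matrix_def by (simp add: transpose_def vec_eq_iff mult.commute)
  ultimately show "psd_matrix (A - (\<chi> i j. w $ i * w $ j))"
    unfolding psd_matrix_def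
    by (simp add: matrix_vector_mult_diff_rdistrib inner_diff_right inner_outer_square)
qed

lemma psd_matrix_sum_of_squares_on:
  fixes A :: "real^'n^'n"
  assumes "finite S" "psd_matrix A" "\<And>i j. i \<notin> S \<Longrightarrow> A $ i $ j = 0"
  shows "\<exists>ws. \<forall>i j. A $ i $ j = (\<Sum>w\<leftarrow>ws. w $ i * w $ j)"
  using assms
proof (induction S arbitrary: A rule: finite_induct)
  case empty
  then show ?case by (intro exI[of _ "[]"]) auto
next
  case (insert k S)
  note psd = insert.prems(1) and rows = insert.prems(2)
  show ?case
  proof (cases "A $ k $ k = 0")
    case True
    show ?thesis
    proof (rule insert.IH[OF psd])
      fix i j assume "i \<notin> S"
      then show "A $ i $ j = 0"
        using rows[of i j] psd_matrix_diag_zero_row[OF psd True] by (cases "i = k") auto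
    qed
  next
    case False
    then have pos: "0 < A $ k $ k"
      using psd inner_axis_matrix_axis[of k A k] unfolding psd_matrix_def by (metis order_le_less)
    define w where "w = (1 / sqrt (A $ k $ k)) *\<^sub>R (A *v axis k 1)"
    define A' where "A' = A - (\<chi> i j. w $ i * w $ j)"
    have "A' $ i $ j = 0" if "i \<notin> S" for i j
      using rows[of i] rows[of k] that pos psd_matrix_sym[OF psd, of i k]
      unfolding A'_def w_def psd_matrix_minus_pivot_square(1)[OF psd pos] by (cases "i = k") auto
    then obtain ws where ws: "\<And>i j. A' $ i $ j = (\<Sum>w\<leftarrow>ws. w $ i * w $ j)"
      using insert.IH psd_matrix_minus_pivot_square(2)[OF psd pos] unfolding A'_def w_def by blast
    have "A $ i $ j = w $ i * w $ j + A' $ i $ j" for i j by (simp add: A'_def)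
    then show ?thesis by (intro exI[of _ "w # ws"]) (simp add: ws)
  qed
qed

lemma psd_matrix_trace_mult_nonneg:
  fixes A M :: "real^'n^'n"
  assumes "psd_matrix A" "\<And>x. 0 \<le> x \<bullet> (M *v x)"
  shows "0 \<le> trace (A ** M)"
proof -
  obtain ws where ws: "\<And>i j. A $ i $ j = (\<Sum>w\<leftarrow>ws. w $ i * w $ j)"
    using psd_matrix_sum_of_squares_on[OF finite_class.finite_UNIV assms(1)] by blast
  have "trace (A ** M) = (\<Sum>w\<leftarrow>ws. \<Sum>i\<in>UNIV. \<Sum>k\<in>UNIV. w $ i * w $ k * M $ k $ i)"
    unfolding trace_def matrix_matrix_mult_def ws
    by (induction ws) (simp_all add: algebra_simps sum.distrib)
  also have "\<dots> = (\<Sum>w\<leftarrow>ws. w \<bullet> (M *v w))"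
    unfolding inner_matrix_vector_eq_sum by (subst sum.swap) (simp add: mult_ac)
  finally show ?thesis using assms(2) by (auto intro!: sum_list_nonneg)
qed

section \<open>The induced metric and the normal projection\<close>

lemma gmat_sym: "gmat u x $ i $ j = gmat u x $ j $ i"
  by (simp add: gmat_def inner_commute)

lemma gmat_transpose: "transpose (gmat u x) = gmat u x"
  by (simp add: transpose_def vec_eq_iff gmat_sym)

lemma ginv_inverse:
  assumes "spacelike_at u x"
  shows "gmat u x ** ginv u x = mat 1" and "ginv u x ** gmat u x = mat 1"
proof -
  have "gmat u x *v \<xi> = 0 \<Longrightarrow> \<xi> = 0" for \<xi>
    using assms unfolding spacelike_at_def by (metis inner_zero_right less_irrefl)
  then have "invertible (gmat u x)"
    using matrix_left_invertible_ker invertible_left_inverse by blast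
  then have "gmat u x ** ginv u x = mat 1 \<and> ginv u x ** gmat u x = mat 1"
    unfolding ginv_def matrix_inv_def invertible_def by (rule someI_ex)
  then show "gmat u x ** ginv u x = mat 1" and "ginv u x ** gmat u x = mat 1" by auto
qed

lemma ginv_transpose:
  assumes "spacelike_at u x"
  shows "transpose (ginv u x) = ginv u x"
  by (metis ginv_inverse[OF assms] gmat_transpose matrix_mul_assoc matrix_mul_lid
      matrix_transpose_mul transpose_mat)

lemma psd_gmat:
  assumes "spacelike_at u x"
  shows "psd_matrix (gmat u x)"
  using assms unfolding psd_matrix_def spacelike_at_def
  by (metis gmat_transpose inner_zero_left order_le_less)

lemma psd_ginv:
  assumes sl: "spacelike_at u x"
  shows "psd_matrix (ginv u x)"
  unfolding psd_matrix_def
proof (intro conjI allI)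
  show "transpose (ginv u x) = ginv u x" by (rule ginv_transpose[OF sl])
  fix c
  define y where "y = ginv u x *v c"
  have "c = gmat u x *v y"
    by (simp add: y_def matrix_vector_mul_assoc ginv_inverse[OF sl])
  then have "c \<bullet> (ginv u x *v c) = y \<bullet> (gmat u x *v y)"
    by (simp add: y_def inner_commute)
  also have "0 \<le> \<dots>" using psd_gmat[OF sl] unfolding psd_matrix_def by blast
  finally show "0 \<le> c \<bullet> (ginv u x *v c)" .
qed

lemma trace_ginv_gmat:
  fixes u :: "real^'n::finite \<Rightarrow> real^'m::finite"
  assumes "spacelike_at u x"
  shows "trace (ginv u x ** gmat u x) = real CARD('n)"
  by (simp add: ginv_inverse[OF assms] trace_I)

lemma inner_gmat:
  fixes u :: "real^'n::finite \<Rightarrow> real^'m::finite" and x \<xi> :: "real^'n"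
  defines "d \<equiv> (\<Sum>j\<in>UNIV. \<xi> $ j *\<^sub>R pd u j x)"
  shows "\<xi> \<bullet> (gmat u x *v \<xi>) = \<xi> \<bullet> \<xi> - d \<bullet> d"
proof -
  have "\<xi> \<bullet> (gmat u x *v \<xi>) = (\<Sum>i\<in>UNIV. \<Sum>j\<in>UNIV. \<xi> $ i * (if i = j then 1 else 0) * \<xi> $ j)
      - (\<Sum>i\<in>UNIV. \<Sum>j\<in>UNIV. \<xi> $ i * (pd u i x \<bullet> pd u j x) * \<xi> $ j)"
    unfolding inner_matrix_vector_eq_sum
    by (simp add: gmat_def right_diff_distrib left_diff_distrib sum_subtractf)
  also have "(\<Sum>i\<in>UNIV. \<Sum>j\<in>UNIV. \<xi> $ i * (if i = j then 1 else 0) * \<xi> $ j) = \<xi> \<bullet> \<xi>"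
  proof -
    have "\<xi> $ i * (if i = j then 1 else 0) * \<xi> $ j = (if i = j then \<xi> $ i * \<xi> $ j else 0)" for i j
      by simp
    then show ?thesis by (simp add: inner_vec_def)
  qed
  also have "(\<Sum>i\<in>UNIV. \<Sum>j\<in>UNIV. \<xi> $ i * (pd u i x \<bullet> pd u j x) * \<xi> $ j) = d \<bullet> d"
    unfolding d_def
    by (simp add: inner_sum_left inner_sum_right sum_distrib_left mult_ac)
      (intro sum.cong refl, simp add: inner_commute)
  finally show ?thesis .
qed

lemma qf_commute: "qf z w = qf w z"
  by (simp add: qf_def inner_commute)

lemma qf_sum_left: "qf (\<Sum>i\<in>S. f i) w = (\<Sum>i\<in>S. qf (f i) w)"
  by (simp add: qf_def fst_sum snd_sum inner_sum_left sum_subtractf)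

lemma qf_sum_right: "qf w (\<Sum>i\<in>S. f i) = (\<Sum>i\<in>S. qf w (f i))"
  by (simp add: qf_commute[of w] qf_sum_left)

lemma qf_scaleR_left: "qf (c *\<^sub>R z) w = c * qf z w"
  by (simp add: qf_def algebra_simps)

lemma qf_scaleR_right: "qf w (c *\<^sub>R z) = c * qf w z"
  by (simp add: qf_def algebra_simps)

lemma qf_tang: "qf (tang u x i) (tang u x k) = gmat u x $ i $ k"
  by (simp add: qf_def tang_def gmat_def inner_axis_axis)

lemma sqn_diff: "sqn (z - w) = sqn z - 2 * qf z w + sqn w"
  by (simp add: sqn_def qf_def inner_diff_left inner_diff_right inner_commute)

lemma sqn_pair_diff: "sqn ((a, b) - (x, y)) = (a - x) \<bullet> (a - x) - (b - y) \<bullet> (b - y)"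
  by (simp add: sqn_def qf_def)

lemma nnorm2_nproj:
  fixes u :: "real^'n::finite \<Rightarrow> real^'m::finite" and z :: "('n, 'm) pspace"
  assumes sl: "spacelike_at u x"
  defines "q \<equiv> \<chi> j. qf z (tang u x j)"
  shows "nnorm2 (nproj u x z) = - sqn z + q \<bullet> (ginv u x *v q)"
proof -
  define c where "c = ginv u x *v q"
  define T where "T = (\<Sum>i\<in>UNIV. c $ i *\<^sub>R tang u x i)"
  have "nproj u x z = z - T"
    unfolding nproj_def T_def c_def q_def
    by (simp add: matrix_vector_mult_def scaleR_sum_left)
  moreover have "qf z T = q \<bullet> c"
    unfolding T_def q_def by (simp add: qf_sum_right qf_scaleR_right inner_vec_def mult.commute)
  moreover have "sqn T = q \<bullet> c"
  proof -
    have "sqn T = c \<bullet> (gmat u x *v c)"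
      unfolding sqn_def T_def
      by (simp add: qf_sum_left qf_sum_right qf_scaleR_left qf_scaleR_right qf_tang
          inner_matrix_vector_eq_sum sum_distrib_left mult_ac)
        (intro sum.cong refl, simp add: gmat_sym)
    also have "gmat u x *v c = q"
      by (simp add: c_def matrix_vector_mul_assoc ginv_inverse[OF sl])
    finally show ?thesis by (simp add: inner_commute)
  qed
  ultimately show ?thesis
    unfolding nnorm2_def c_def by (simp add: sqn_diff)
qed

lemma nnorm2_nproj_vertical:
  fixes u :: "real^'n::finite \<Rightarrow> real^'m::finite"
  assumes sl: "spacelike_at u x"
  shows "y \<bullet> y \<le> nnorm2 (nproj u x (0, y))"
proof -
  have "sqn ((0::real^'n), y) = - (y \<bullet> y)" by (simp add: sqn_def qf_def)
  then show ?thesis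
    using psd_ginv[OF sl] unfolding nnorm2_nproj[OF sl] psd_matrix_def by simp
qed

lemma vsq_eq:
  fixes u :: "real^'n::finite \<Rightarrow> real^'m::finite"
  assumes sl: "spacelike_at u x"
  defines "q \<equiv> \<lambda>A. \<chi> j. - (pd u j x $ A)"
  shows "vsq u x = real CARD('m) + (\<Sum>A\<in>UNIV. q A \<bullet> (ginv u x *v q A))"
proof -
  have "(\<chi> j. qf (0, axis A 1) (tang u x j)) = q A" for A
    unfolding q_def by (simp add: qf_def tang_def inner_axis' vec_eq_iff)
  moreover have "sqn ((0::real^'n), (axis A 1::real^'m)) = -1" for A
    by (simp add: sqn_def qf_def)
  ultimately show ?thesis
    unfolding vsq_def nnorm2_nproj[OF sl] by (simp add: sum.distrib)
qed

lemma linear_vec_expansion: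
  fixes L :: "real^'n \<Rightarrow> 'b::real_vector"
  assumes "linear L"
  shows "L \<xi> = (\<Sum>j\<in>UNIV. \<xi> $ j *\<^sub>R L (axis j 1))"
proof -
  have "\<xi> = (\<Sum>j\<in>UNIV. \<xi> $ j *\<^sub>R axis j 1)"
    using basis_expansion[of \<xi>] by (simp add: scalar_mult_eq_scaleR)
  then show ?thesis
    by (metis (no_types, lifting) assms linear_cmul linear_sum sum.cong)
qed

lemma smooth_on_has_derivative:
  assumes "smooth_on S f" "z \<in> S"
  shows "(f has_derivative frechet_derivative f (at z)) (at z)"
proof -
  have "C_k 1 S f" using assms(1) unfolding smooth_on_def by blast
  then show ?thesis using assms(2) by (simp add: frechet_derivative_works)
qed

lemma smooth_on_partial_differentiable:
  assumes "smooth_on S f" "z \<in> S" "b \<in> Basis"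
  shows "(\<lambda>z. frechet_derivative f (at z) b) differentiable (at z)"
proof -
  have "C_k 2 S f" using assms(1) unfolding smooth_on_def by blast
  then show ?thesis using assms(2,3) by (simp add: numeral_2_eq_2)
qed

lemma has_derivative_slice:
  assumes "(F has_derivative F') (at (y, t))"
  shows "((\<lambda>y. F (y, t)) has_derivative (\<lambda>h. F' (h, 0))) (at y)"
proof -
  have "((\<lambda>y. (y, t)) has_derivative (\<lambda>h. (h, 0))) (at y)"
    by (auto intro!: derivative_eq_intros)
  from diff_chain_at[OF this assms] show ?thesis by (simp add: o_def)
qed

lemma has_derivative_time_slice:
  assumes "(F has_derivative F') (at (y, t))"
  shows "((\<lambda>t. F (y, t)) has_derivative (\<lambda>h. F' (0, h))) (at t)"
proof -
  have "((\<lambda>t. (y, t)) has_derivative (\<lambda>h. (0, h))) (at t)"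
    by (auto intro!: derivative_eq_intros)
  from diff_chain_at[OF this assms] show ?thesis by (simp add: o_def)
qed

lemma has_derivative_along_line:
  assumes "(f has_derivative f') (at (x0 + s *\<^sub>R \<xi>))"
  shows "((\<lambda>s. f (x0 + s *\<^sub>R \<xi>)) has_vector_derivative f' \<xi>) (at s)"
proof -
  have "((\<lambda>s. x0 + s *\<^sub>R \<xi>) has_derivative (\<lambda>h. h *\<^sub>R \<xi>)) (at s)"
    by (auto intro!: derivative_eq_intros)
  from diff_chain_at[OF this assms]
  have "((\<lambda>s. f (x0 + s *\<^sub>R \<xi>)) has_derivative (\<lambda>h. f' (h *\<^sub>R \<xi>))) (at s)"
    by (simp add: o_def)
  then show ?thesis
    unfolding has_vector_derivative_def
    using linear_cmul[OF has_derivative_linear[OF assms]] by simp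
qed

lemma line_has_vector_derivative_pd:
  fixes u :: "real^'n::finite \<Rightarrow> real^'m::finite"
  assumes "u differentiable (at (x0 + s *\<^sub>R \<xi>))"
  shows "((\<lambda>s. u (x0 + s *\<^sub>R \<xi>)) has_vector_derivative
           (\<Sum>j\<in>UNIV. \<xi> $ j *\<^sub>R pd u j (x0 + s *\<^sub>R \<xi>))) (at s)"
proof -
  have der: "(u has_derivative frechet_derivative u (at (x0 + s *\<^sub>R \<xi>))) (at (x0 + s *\<^sub>R \<xi>))"
    using assms frechet_derivative_works by blast
  have "frechet_derivative u (at (x0 + s *\<^sub>R \<xi>)) \<xi> = (\<Sum>j\<in>UNIV. \<xi> $ j *\<^sub>R pd u j (x0 + s *\<^sub>R \<xi>))"
    unfolding pd_def by (rule linear_vec_expansion[OF has_derivative_linear[OF der]])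
  with has_derivative_along_line[OF der] show ?thesis by simp
qed

lemmas has_vector_derivative_inner =
  bounded_bilinear.has_vector_derivative[OF bounded_bilinear_inner]

lemmas has_vector_derivative_scaleR_right =
  bounded_linear.has_vector_derivative[OF bounded_linear_scaleR_right]

lemma second_derivative_nonneg_at_min:
  fixes k k' :: "real \<Rightarrow> real"
  assumes der: "\<And>s. (k has_real_derivative k' s) (at s)"
    and der2: "(k' has_real_derivative D) (at 0)"
    and min: "\<And>s. k 0 \<le> k s"
  shows "0 \<le> D"
proof (rule ccontr)
  assume "\<not> 0 \<le> D"
  then obtain d where d: "0 < d" "\<And>h. 0 < h \<Longrightarrow> h < d \<Longrightarrow> k' h < k' 0"
    using DERIV_neg_dec_right[OF der2] by force
  have "k' 0 = 0"
    by (rule DERIV_local_min[OF der[of 0], of 1]) (use min in auto)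
  obtain z where z: "0 < z" "z < d / 2" "k (d / 2) - k 0 = (d / 2 - 0) * k' z"
    using MVT2[of 0 "d / 2" k k'] d(1) der by auto
  have "k' z < 0" using d z \<open>k' 0 = 0\<close> by force
  then have "(d / 2 - 0) * k' z < 0" using d(1) by (simp add: mult_pos_neg)
  then show False using z(3) min[of "d / 2"] by simp
qed

lemma derivative_nonpos_at_left_min:
  fixes k :: "real \<Rightarrow> real"
  assumes der: "(k has_real_derivative D) (at t0)"
    and "0 < \<delta>" and min: "\<And>s. t0 - \<delta> < s \<Longrightarrow> s \<le> t0 \<Longrightarrow> k t0 \<le> k s"
  shows "D \<le> 0"
proof (rule ccontr)
  assume "\<not> D \<le> 0"
  then obtain d where d: "0 < d" "\<And>h. 0 < h \<Longrightarrow> h < d \<Longrightarrow> k (t0 - h) < k t0"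
    using DERIV_pos_inc_left[OF der] by force
  define h where "h = min d \<delta> / 2"
  have "0 < h" "h < d" "h < \<delta>" using d(1) \<open>0 < \<delta>\<close> by (auto simp: h_def)
  then show False using d(2)[of h] min[of "t0 - h"] by auto
qed

lemma continuous_attains_inf_coercive:
  fixes f :: "'a::topological_space \<Rightarrow> 'b::linorder_topology"
  assumes "compact C" "continuous_on C f" "z1 \<in> C"
    and "\<And>z. z \<in> S - C \<Longrightarrow> f z1 \<le> f z"
  obtains z0 where "z0 \<in> C" "\<And>z. z \<in> S \<Longrightarrow> f z0 \<le> f z"
proof -
  obtain z0 where "z0 \<in> C" "\<And>z. z \<in> C \<Longrightarrow> f z0 \<le> f z"
    using continuous_attains_inf[of C f] assms(1-3) by blast
  then show ?thesis using that assms(3,4) by (meson Diff_iff order_trans)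
qed

section \<open>Spacelike graphs\<close>

lemma spacelike_gradient_bound:
  fixes u :: "real^'n::finite \<Rightarrow> real^'m::finite" and x \<xi> :: "real^'n"
  assumes sl: "spacelike_at u x" and vb: "vsq u x \<le> Cv"
  defines "C \<equiv> Cv - real CARD('m)" and "d \<equiv> (\<Sum>j\<in>UNIV. \<xi> $ j *\<^sub>R pd u j x)"
  shows "0 \<le> C" and "(1 + C) * (d \<bullet> d) \<le> C * (\<xi> \<bullet> \<xi>)"
proof -
  define G where "G = ginv u x"
  define q where "q = (\<lambda>A. \<chi> j. - (pd u j x $ A))"
  define S where "S = (\<Sum>A\<in>UNIV. q A \<bullet> (G *v q A))"
  have psdG: "psd_matrix G" unfolding G_def by (rule psd_ginv[OF sl])
  have "S \<le> C" using vsq_eq[OF sl] vb unfolding S_def C_def G_def q_def by simp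
  moreover have "0 \<le> S"
    using psdG unfolding S_def psd_matrix_def by (simp add: sum_nonneg)
  ultimately show "0 \<le> C" by simp
  define b where "b = gmat u x *v \<xi>"
  have Gb: "G *v b = \<xi>"
    by (simp add: G_def b_def matrix_vector_mul_assoc ginv_inverse[OF sl])
  have bGb: "b \<bullet> (G *v b) = \<xi> \<bullet> \<xi> - d \<bullet> d"
    unfolding Gb d_def by (simp add: b_def inner_commute inner_gmat)
  have "d $ A = - (q A \<bullet> \<xi>)" for A
    by (simp add: d_def q_def inner_vec_def sum_negf mult.commute)
  then have "(d $ A)\<^sup>2 \<le> (\<xi> \<bullet> \<xi> - d \<bullet> d) * (q A \<bullet> (G *v q A))" for A
    using psd_matrix_cauchy_schwarz[OF psdG, of "q A" b] unfolding bGb unfolding Gb by simp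
  then have "d \<bullet> d \<le> (\<xi> \<bullet> \<xi> - d \<bullet> d) * S"
    unfolding S_def sum_distrib_left
    by (simp add: inner_vec_def power2_eq_square[symmetric] sum_mono)
  also have "\<dots> \<le> (\<xi> \<bullet> \<xi> - d \<bullet> d) * C"
    using \<open>S \<le> C\<close> bGb psdG unfolding psd_matrix_def by (metis mult_left_mono)
  finally show "(1 + C) * (d \<bullet> d) \<le> C * (\<xi> \<bullet> \<xi>)" by (simp add: algebra_simps)
qed

lemma spacelike_graph_lipschitz:
  fixes u :: "real^'n::finite \<Rightarrow> real^'m::finite"
  assumes M: "spacelike_entire_graph u" and vb: "\<And>x. vsq u x \<le> Cv"
  obtains \<theta> where "0 \<le> \<theta>" "\<theta> < 1" "\<And>x y. norm (u x - u y) \<le> \<theta> * norm (x - y)"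
proof -
  define C where "C = Cv - real CARD('m)"
  have sl: "spacelike_at u x" for x using M unfolding spacelike_entire_graph_def by blast
  have C0: "0 \<le> C" unfolding C_def by (rule spacelike_gradient_bound(1)[OF sl vb])
  define \<theta> where "\<theta> = sqrt (C / (1 + C))"
  have "C_k 1 UNIV u" using M unfolding spacelike_entire_graph_def smooth_on_def by blast
  then have der: "(u has_derivative frechet_derivative u (at x)) (at x)" for x
    by (simp add: frechet_derivative_works)
  have "onorm (frechet_derivative u (at x)) \<le> \<theta>" for x
  proof (rule onorm_le)
    fix \<xi> :: "real^'n"
    define d where "d = (\<Sum>j\<in>UNIV. \<xi> $ j *\<^sub>R pd u j x)"
    have "frechet_derivative u (at x) \<xi> = d"
      unfolding d_def pd_def
      by (rule linear_vec_expansion[OF has_derivative_linear[OF der]])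
    moreover have "(1 + C) * (d \<bullet> d) \<le> C * (\<xi> \<bullet> \<xi>)"
      unfolding d_def C_def by (rule spacelike_gradient_bound(2)[OF sl vb])
    then have "d \<bullet> d \<le> C / (1 + C) * (\<xi> \<bullet> \<xi>)" using C0 by (simp add: field_simps)
    then have "sqrt (d \<bullet> d) \<le> sqrt (C / (1 + C)) * sqrt (\<xi> \<bullet> \<xi>)"
      by (metis real_sqrt_le_mono real_sqrt_mult)
    ultimately show "norm (frechet_derivative u (at x) \<xi>) \<le> \<theta> * norm \<xi>"
      by (simp add: \<theta>_def norm_eq_sqrt_inner)
  qed
  then have "norm (u x - u y) \<le> \<theta> * norm (x - y)" for x y
    using differentiable_bound[OF convex_UNIV, of u "\<lambda>x. frechet_derivative u (at x)"] der
    by (simp add: has_derivative_at_withinI)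
  moreover have "0 \<le> \<theta>" "\<theta> < 1" using C0 by (auto simp: \<theta>_def)
  ultimately show ?thesis using that by blast
qed

lemma inner_hessian_form:
  fixes u :: "real^'n::finite \<Rightarrow> real^'m::finite" and x \<xi> :: "real^'n"
  shows "\<xi> \<bullet> ((\<chi> i j. \<beta> \<bullet> pd2 u i j x) *v \<xi>)
       = \<beta> \<bullet> (\<Sum>j\<in>UNIV. \<xi> $ j *\<^sub>R (\<Sum>i\<in>UNIV. \<xi> $ i *\<^sub>R pd2 u i j x))"
  unfolding inner_matrix_vector_eq_sum
  by (simp add: inner_sum_right sum_distrib_left mult_ac) (subst sum.swap, simp add: mult_ac)

lemma hessian_psd_at_sqn_min:
  fixes u :: "real^'n::finite \<Rightarrow> real^'m::finite" and a x0 \<xi> :: "real^'n" and b :: "real^'m"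
  assumes du: "\<And>x. u differentiable (at x)"
    and dpd: "\<And>j x. (\<lambda>y. pd u j y) differentiable (at x)"
    and min: "\<And>x. sqn ((a, b) - (x0, u x0)) \<le> sqn ((a, b) - (x, u x))"
  shows "0 \<le> \<xi> \<bullet> ((gmat u x0 + (\<chi> i j. (b - u x0) \<bullet> pd2 u i j x0)) *v \<xi>)"
proof -
  define W1 where "W1 s = (\<Sum>j\<in>UNIV. \<xi> $ j *\<^sub>R pd u j (x0 + s *\<^sub>R \<xi>))" for s
  define W2 where "W2 = (\<Sum>j\<in>UNIV. \<xi> $ j *\<^sub>R (\<Sum>i\<in>UNIV. \<xi> $ i *\<^sub>R pd2 u i j x0))"
  define P where "P s = a - (x0 + s *\<^sub>R \<xi>)" for s
  define Q where "Q s = b - u (x0 + s *\<^sub>R \<xi>)" for s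
  have P': "(P has_vector_derivative - \<xi>) (at s)" for s
    unfolding P_def has_vector_derivative_def by (auto intro!: derivative_eq_intros)
  have Q': "(Q has_vector_derivative - W1 s) (at s)" for s
    using has_vector_derivative_diff
        [OF has_vector_derivative_const line_has_vector_derivative_pd[OF du]]
    unfolding Q_def W1_def by simp
  have "((\<lambda>s. pd u j (x0 + s *\<^sub>R \<xi>)) has_vector_derivative
          (\<Sum>i\<in>UNIV. \<xi> $ i *\<^sub>R pd2 u i j x0)) (at 0)"
    for j
    using line_has_vector_derivative_pd[of "\<lambda>y. pd u j y" x0 0 \<xi>] dpd by (simp add: pd2_def)
  then have W1': "(W1 has_vector_derivative W2) (at 0)"
    unfolding W1_def W2_def by (intro has_vector_derivative_sum has_vector_derivative_scaleR_right)
  \<comment> \<open>\<open>k\<close> is the quasi-distance to \<open>(a, b)\<close> along the line \<open>x0 + s \<xi>\<close>; half of \<open>k'' 0\<close> is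
    the quadratic form of the claim.\<close>
  define k where "k s = P s \<bullet> P s - Q s \<bullet> Q s" for s
  define k' where "k' s = 2 * (Q s \<bullet> W1 s) - 2 * (P s \<bullet> \<xi>)" for s
  have "(k has_real_derivative k' s) (at s)" for s
    using has_vector_derivative_diff
        [OF has_vector_derivative_inner[OF P' P'] has_vector_derivative_inner[OF Q' Q']]
    unfolding k_def k'_def has_real_derivative_iff_has_vector_derivative
    by (simp add: inner_commute)
  moreover have "(k' has_real_derivative 2 * (Q 0 \<bullet> W2 - W1 0 \<bullet> W1 0) + 2 * (\<xi> \<bullet> \<xi>)) (at 0)"
  proof -
    have "((\<lambda>s. Q s \<bullet> W1 s) has_real_derivative Q 0 \<bullet> W2 - W1 0 \<bullet> W1 0) (at 0)"
      using has_vector_derivative_inner[OF Q' W1']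
      by (simp add: has_real_derivative_iff_has_vector_derivative)
    moreover have "((\<lambda>s. P s \<bullet> \<xi>) has_real_derivative - (\<xi> \<bullet> \<xi>)) (at 0)"
      using has_vector_derivative_inner[OF P' has_vector_derivative_const[of \<xi>]]
      by (simp add: has_real_derivative_iff_has_vector_derivative)
    ultimately show ?thesis
      unfolding k'_def by (auto intro!: derivative_eq_intros)
  qed
  moreover have "k 0 \<le> k s" for s
    using min[of "x0 + s *\<^sub>R \<xi>"] unfolding k_def P_def Q_def sqn_pair_diff by simp
  ultimately have "0 \<le> 2 * (Q 0 \<bullet> W2 - W1 0 \<bullet> W1 0) + 2 * (\<xi> \<bullet> \<xi>)"
    by (rule second_derivative_nonneg_at_min)
  moreover have "\<xi> \<bullet> ((gmat u x0 + (\<chi> i j. (b - u x0) \<bullet> pd2 u i j x0)) *v \<xi>)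
      = \<xi> \<bullet> \<xi> - W1 0 \<bullet> W1 0 + Q 0 \<bullet> W2"
    by (simp add: matrix_vector_mult_add_rdistrib inner_add_right inner_gmat inner_hessian_form
        W1_def W2_def Q_def)
  ultimately show ?thesis by simp
qed

section \<open>The quasi-sphere barrier\<close>

definition qs_barrier :: "((real^'n::finite) \<times> real \<Rightarrow> real^'m::finite) \<Rightarrow> ('n, 'm) pspace \<Rightarrow>
    real^'n \<Rightarrow> real \<Rightarrow> real" where
  "qs_barrier U p x t = sqn (p - (x, U (x, t))) + 2 * real CARD('n) * t"

lemma graph_at_subset_qs_inside_iff:
  "graph_at U t \<subseteq> qs_inside p R t \<longleftrightarrow> (\<forall>x. - R\<^sup>2 \<le> qs_barrier U p x t)"
  unfolding graph_at_def qs_inside_def qs_barrier_def by (auto simp: algebra_simps)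

lemma sqn_nonneg_far_from_lipschitz_graph:
  fixes f :: "real^'n::finite \<Rightarrow> real^'m::finite"
  assumes "\<theta> < 1" and lip: "\<And>x y. norm (f x - f y) \<le> \<theta> * norm (x - y)"
    and near: "norm (y - f x) \<le> D" and far: "(norm (b - f a) + D) / (1 - \<theta>) \<le> norm (x - a)"
  shows "0 \<le> sqn ((a, b) - (x, y))"
proof -
  have "norm (b - y) \<le> norm ((b - f a) + (f a - f x)) + norm (f x - y)"
    using norm_triangle_ineq[of "(b - f a) + (f a - f x)" "f x - y"] by simp
  also have "\<dots> \<le> norm (b - f a) + norm (f a - f x) + norm (f x - y)"
    using norm_triangle_ineq[of "b - f a" "f a - f x"] by simp
  also have "\<dots> \<le> norm (b - f a) + \<theta> * norm (x - a) + D"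
    using lip[of a x] near by (simp add: norm_minus_commute)
  also have "\<dots> \<le> norm (x - a)"
    using far \<open>\<theta> < 1\<close> by (simp add: field_simps)
  finally have "(norm (b - y))\<^sup>2 \<le> (norm (a - x))\<^sup>2"
    by (simp add: norm_minus_commute power_mono)
  then show ?thesis unfolding sqn_pair_diff by (simp add: power2_norm_eq_inner)
qed

lemma qs_barrier_nonneg_far:
  assumes "\<theta> < 1" "\<And>x y. norm (u0 x - u0 y) \<le> \<theta> * norm (x - y)"
    and "norm (U (x, t) - u0 x) \<le> D" "0 \<le> t"
    and "(norm (b - u0 a) + D) / (1 - \<theta>) \<le> norm (x - a)"
  shows "0 \<le> qs_barrier U (a, b) x t"
  using sqn_nonneg_far_from_lipschitz_graph[OF assms(1,2,3,5)] \<open>0 \<le> t\<close>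
  unfolding qs_barrier_def by simp

lemma continuous_on_qs_barrier:
  assumes "continuous_on (UNIV \<times> {0..}) U"
  shows "continuous_on (UNIV \<times> {0..}) (\<lambda>z. qs_barrier U p (fst z) (snd z))"
proof -
  have "continuous_on (UNIV \<times> {0..}) (\<lambda>z. U (fst z, snd z))" using assms by simp
  then show ?thesis
    unfolding qs_barrier_def sqn_def qf_def by (intro continuous_intros) auto
qed

section \<open>Graphical spacelike mean curvature flow\<close>

context
  fixes U :: "(real^'n::finite) \<times> real \<Rightarrow> real^'m::finite" and u0
  assumes flow: "graphical_smcf U u0"
begin

lemma graphical_smcf_smooth: "smooth_on (UNIV \<times> {0<..}) U"
  using flow unfolding graphical_smcf_def by blast

lemma graphical_smcf_has_derivative:
  assumes "0 < t"
  shows "(U has_derivative frechet_derivative U (at (y, t))) (at (y, t))"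
  using assms by (intro smooth_on_has_derivative[OF graphical_smcf_smooth]) simp

lemma pd_slice:
  assumes "0 < t"
  shows "pd (slice U t) j y = frechet_derivative U (at (y, t)) (axis j 1, 0)"
proof -
  have "frechet_derivative (\<lambda>y. U (y, t)) (at y) = (\<lambda>h. frechet_derivative U (at (y, t)) (h, 0))"
    by (rule frechet_derivative_at
        [OF has_derivative_slice[OF graphical_smcf_has_derivative[OF assms]], symmetric])
  then show ?thesis unfolding pd_def slice_def by simp
qed

lemma slice_differentiable:
  assumes "0 < t"
  shows "slice U t differentiable (at y)"
  unfolding slice_def differentiable_def
  using has_derivative_slice[OF graphical_smcf_has_derivative[OF assms]] by blast

lemma pd_slice_differentiable:
  assumes "0 < t"
  shows "(\<lambda>y. pd (slice U t) j y) differentiable (at y)"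
proof -
  have "(\<lambda>z. frechet_derivative U (at z) (axis j 1, 0)) differentiable (at (y, t))"
    using assms
    by (intro smooth_on_partial_differentiable[OF graphical_smcf_smooth])
      (auto simp: Basis_prod_def Basis_vec_def)
  moreover have "(\<lambda>y. (y, t)) differentiable (at y)" by simp
  ultimately have
    "((\<lambda>z. frechet_derivative U (at z) (axis j 1, 0)) \<circ> (\<lambda>y. (y, t))) differentiable (at y)"
    by (intro differentiable_chain_at)
  then show ?thesis using pd_slice[OF assms] by (simp add: o_def)
qed

lemma graphical_smcf_time_derivative:
  assumes "0 < t"
  shows "((\<lambda>s. U (y, s)) has_vector_derivative time_deriv U (y, t)) (at t)"
proof -
  have lin: "linear (frechet_derivative U (at (y, t)))"
    using has_derivative_linear[OF graphical_smcf_has_derivative[OF assms]] .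
  have "frechet_derivative U (at (y, t)) (0, h) = h *\<^sub>R time_deriv U (y, t)" for h
  proof -
    have "((0::real^'n), h) = h *\<^sub>R (0, 1)" by simp
    then show ?thesis unfolding time_deriv_def by (metis linear_cmul[OF lin])
  qed
  then show ?thesis
    using has_derivative_time_slice[OF graphical_smcf_has_derivative[OF assms], of y]
    unfolding has_vector_derivative_def by (simp only:)
qed

lemma graphical_smcf_speed:
  assumes "0 < t"
  shows "time_deriv U (x, t) \<bullet> time_deriv U (x, t) \<le> nnorm2 (Hvec (slice U t) x)"
proof -
  have sl: "spacelike_at (slice U t) x" and eq: "time_deriv U (x, t) =
      (\<Sum>i\<in>UNIV. \<Sum>j\<in>UNIV. ginv (slice U t) x $ i $ j *\<^sub>R pd2 (slice U t) i j x)"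
    using flow assms unfolding graphical_smcf_def by blast+
  have "(\<Sum>i\<in>UNIV. \<Sum>j\<in>UNIV. ginv (slice U t) x $ i $ j *\<^sub>R ((0::real^'n), pd2 (slice U t) i j x))
      = (0, \<Sum>i\<in>UNIV. \<Sum>j\<in>UNIV. ginv (slice U t) x $ i $ j *\<^sub>R pd2 (slice U t) i j x)"
    by (simp add: prod_eq_iff fst_sum snd_sum)
  then have "Hvec (slice U t) x = nproj (slice U t) x (0, time_deriv U (x, t))"
    unfolding Hvec_def eq by simp
  then show ?thesis using nnorm2_nproj_vertical[OF sl] by simp
qed

lemma graphical_smcf_displacement:
  assumes speed: "\<And>x s. 0 < s \<Longrightarrow> s \<le> T \<Longrightarrow> norm (time_deriv U (x, s)) \<le> K"
    and t: "0 \<le> t" "t \<le> T"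
  shows "norm (U (x, t) - u0 x) \<le> K * t"
proof -
  have U0: "U (x, 0) = u0 x" using flow unfolding graphical_smcf_def by blast
  show ?thesis
  proof (cases "t = 0")
    case True
    then show ?thesis using U0 by simp
  next
    case False
    then have "0 < t" using t by simp
    have "continuous_on (UNIV \<times> {0..}) U" using flow unfolding graphical_smcf_def by blast
    then have cont: "continuous_on {0..t} (\<lambda>s. U (x, s))"
      by (rule continuous_on_compose2) (auto intro!: continuous_intros)
    have der: "((\<lambda>s. U (x, s)) has_derivative (\<lambda>h. h *\<^sub>R time_deriv U (x, s))) (at s)"
      if "0 < s" "s < t" for s
      using graphical_smcf_time_derivative[OF that(1)] unfolding has_vector_derivative_def .
    obtain s where s: "s \<in> {0<..<t}"
      and mvt: "norm (U (x, t) - U (x, 0)) \<le> norm ((t - 0) *\<^sub>R time_deriv U (x, s))"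
      using mvt_general[OF \<open>0 < t\<close> cont der] by blast
    have "norm ((t - 0) *\<^sub>R time_deriv U (x, s)) = t * norm (time_deriv U (x, s))"
      using \<open>0 < t\<close> by simp
    also have "\<dots> \<le> t * K" using speed[of s x] s t \<open>0 < t\<close> by (intro mult_left_mono) auto
    finally show ?thesis using mvt U0 by (simp add: mult.commute)
  qed
qed

lemma tame_speed_bound:
  assumes "tame U C_H"
  obtains K where "0 \<le> K" "\<And>x s. 0 < s \<Longrightarrow> s \<le> T \<Longrightarrow> norm (time_deriv U (x, s)) \<le> K"
proof -
  obtain f where f: "continuous_on {0..} f" "\<And>t x. 0 \<le> t \<Longrightarrow> nnorm2 (Hvec (slice U t) x) \<le> f t"
    using assms unfolding tame_def by blast
  have "compact (f ` {0..T})"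
    by (rule compact_continuous_image) (auto intro: continuous_on_subset[OF f(1)])
  then obtain B where B: "\<And>s. s \<in> {0..T} \<Longrightarrow> \<bar>f s\<bar> \<le> B"
    using compact_imp_bounded bounded_real by (metis imageI)
  have "norm (time_deriv U (x, s)) \<le> sqrt \<bar>B\<bar>" if "0 < s" "s \<le> T" for x s
  proof -
    have "time_deriv U (x, s) \<bullet> time_deriv U (x, s) \<le> \<bar>B\<bar>"
      using graphical_smcf_speed[OF that(1), of x] f(2)[of s x] B[of s] that by force
    then show ?thesis by (simp add: norm_eq_sqrt_inner)
  qed
  then show ?thesis using that[of "sqrt \<bar>B\<bar>"] by simp
qed

lemma graphical_smcf_spatial_min:
  assumes t: "0 < t"
    and min: "\<And>x. sqn ((a, b) - (x0, U (x0, t))) \<le> sqn ((a, b) - (x, U (x, t)))"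
  shows "0 \<le> real CARD('n) + (b - U (x0, t)) \<bullet> time_deriv U (x0, t)"
proof -
  define u where "u = slice U t"
  define G where "G = ginv u x0"
  define H where "H = (\<chi> i j. (b - u x0) \<bullet> pd2 u i j x0)"
  have sl: "spacelike_at u x0" and eq: "time_deriv U (x0, t) =
      (\<Sum>i\<in>UNIV. \<Sum>j\<in>UNIV. G $ i $ j *\<^sub>R pd2 u i j x0)"
    using flow t unfolding graphical_smcf_def u_def G_def by blast+
  have "0 \<le> trace (G ** (gmat u x0 + H))"
  proof (rule psd_matrix_trace_mult_nonneg)
    show "psd_matrix G" unfolding G_def by (rule psd_ginv[OF sl])
    show "0 \<le> \<xi> \<bullet> ((gmat u x0 + H) *v \<xi>)" for \<xi>
      unfolding H_def u_def
      by (rule hessian_psd_at_sqn_min[OF slice_differentiable[OF t] pd_slice_differentiable[OF t]])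
        (use min in \<open>simp add: slice_def\<close>)
  qed
  also have "trace (G ** (gmat u x0 + H)) = real CARD('n) + trace (G ** H)"
    unfolding G_def by (simp add: matrix_add_ldistrib trace_add trace_ginv_gmat[OF sl])
  also have "trace (G ** H) = (\<Sum>i\<in>UNIV. \<Sum>k\<in>UNIV. G $ k $ i * ((b - u x0) \<bullet> pd2 u k i x0))"
    unfolding trace_def matrix_matrix_mult_def H_def G_def
    by (simp add: psd_matrix_sym[OF psd_ginv[OF sl]])
  also have "\<dots> = (b - U (x0, t)) \<bullet> time_deriv U (x0, t)"
    unfolding eq by (simp add: inner_sum_right u_def slice_def) (rule sum.swap)
  finally show ?thesis .
qed

lemma qs_barrier_time_derivative:
  assumes "0 < t"
  shows "((\<lambda>s. qs_barrier U (a, b) x s) has_real_derivative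
           2 * ((b - U (x, t)) \<bullet> time_deriv U (x, t)) + 2 * real CARD('n)) (at t)"
proof -
  have "((\<lambda>s. b - U (x, s)) has_vector_derivative - time_deriv U (x, t)) (at t)"
    using has_vector_derivative_diff[OF has_vector_derivative_const
        graphical_smcf_time_derivative[OF assms]] by simp
  from has_vector_derivative_inner[OF this this]
  have "((\<lambda>s. (b - U (x, s)) \<bullet> (b - U (x, s))) has_real_derivative
      - 2 * ((b - U (x, t)) \<bullet> time_deriv U (x, t))) (at t)"
    by (simp add: has_real_derivative_iff_has_vector_derivative inner_commute)
  then show ?thesis
    unfolding qs_barrier_def sqn_pair_diff by (auto intro!: derivative_eq_intros)
qed

lemma qs_barrier_no_interior_min:
  assumes "0 < t0" "0 < \<epsilon>" "0 < \<delta>"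
    and spatial: "\<And>x. qs_barrier U (a, b) x0 t0 \<le> qs_barrier U (a, b) x t0"
    and temporal: "\<And>s. t0 - \<delta> < s \<Longrightarrow> s \<le> t0 \<Longrightarrow>
      qs_barrier U (a, b) x0 t0 + \<epsilon> * t0 \<le> qs_barrier U (a, b) x0 s + \<epsilon> * s"
  shows False
proof -
  define \<beta> where "\<beta> = (b - U (x0, t0)) \<bullet> time_deriv U (x0, t0)"
  have "0 \<le> real CARD('n) + \<beta>"
    unfolding \<beta>_def using spatial
    by (intro graphical_smcf_spatial_min[OF \<open>0 < t0\<close>]) (simp add: qs_barrier_def)
  moreover have "((\<lambda>s. qs_barrier U (a, b) x0 s + \<epsilon> * s) has_real_derivative
      2 * \<beta> + 2 * real CARD('n) + \<epsilon>) (at t0)"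
    unfolding \<beta>_def using qs_barrier_time_derivative[OF \<open>0 < t0\<close>]
    by (auto intro!: derivative_eq_intros)
  then have "2 * \<beta> + 2 * real CARD('n) + \<epsilon> \<le> 0"
    by (rule derivative_nonpos_at_left_min[OF _ \<open>0 < \<delta>\<close>]) (use temporal in auto)
  ultimately show False using \<open>0 < \<epsilon>\<close> by simp
qed

lemma qs_barrier_preserved:
  assumes "\<theta> < 1" and lip: "\<And>x y. norm (u0 x - u0 y) \<le> \<theta> * norm (x - y)"
    and disp: "\<And>x t. 0 \<le> t \<Longrightarrow> t \<le> T \<Longrightarrow> norm (U (x, t) - u0 x) \<le> D"
    and init: "\<And>x. - R\<^sup>2 \<le> qs_barrier U (a, b) x 0" and "0 \<le> T"
  shows "- R\<^sup>2 \<le> qs_barrier U (a, b) x1 T"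
proof (rule ccontr)
  let ?\<phi> = "qs_barrier U (a, b)"
  assume "\<not> ?thesis"
  then have neg: "?\<phi> x1 T < - R\<^sup>2" by simp
  then have "0 < T" using init[of x1] \<open>0 \<le> T\<close> by (cases "T = 0") auto
  \<comment> \<open>The penalty \<open>\<epsilon> * t\<close> keeps \<open>(x1, T)\<close> below \<open>-R\<^sup>2\<close> but makes the time derivative
    at a minimum strictly positive.\<close>
  define \<epsilon> where "\<epsilon> = (- R\<^sup>2 - ?\<phi> x1 T) / (2 * T)"
  define \<psi> where "\<psi> z = ?\<phi> (fst z) (snd z) + \<epsilon> * snd z" for z
  define C where "C = cball a ((norm (b - u0 a) + D) / (1 - \<theta>)) \<times> {0..T}"
  have "0 < \<epsilon>" unfolding \<epsilon>_def using neg \<open>0 < T\<close> by simp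
  have "\<psi> (x1, T) = (?\<phi> x1 T - R\<^sup>2) / 2" using \<open>0 < T\<close> by (simp add: \<psi>_def \<epsilon>_def field_simps)
  then have low: "\<psi> (x1, T) < - R\<^sup>2" using neg by simp
  have far: "0 \<le> ?\<phi> x t" if "(x, t) \<in> UNIV \<times> {0..T} - C" for x t
    using qs_barrier_nonneg_far[where U = U and x = x and t = t, OF \<open>\<theta> < 1\<close> lip disp] that
    by (auto simp: C_def dist_norm norm_minus_commute)
  obtain z0 where "z0 \<in> C" and min: "\<And>z. z \<in> UNIV \<times> {0..T} \<Longrightarrow> \<psi> z0 \<le> \<psi> z"
  proof (rule continuous_attains_inf_coercive)
    show "compact C" unfolding C_def by (intro compact_Times compact_cball compact_Icc)
    show "continuous_on C \<psi>"
      unfolding \<psi>_def C_def using flow unfolding graphical_smcf_def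
      by (intro continuous_intros continuous_on_subset[OF continuous_on_qs_barrier]) auto
    show "(x1, T) \<in> C"
    proof (rule ccontr)
      assume "(x1, T) \<notin> C"
      then have "0 \<le> ?\<phi> x1 T" using far[of x1 T] \<open>0 \<le> T\<close> by simp
      then show False using neg by (smt (verit) zero_le_power2)
    qed
    show "\<psi> (x1, T) \<le> \<psi> z" if "z \<in> UNIV \<times> {0..T} - C" for z
    proof -
      have "0 \<le> ?\<phi> (fst z) (snd z)" "0 \<le> \<epsilon> * snd z"
        using far[of "fst z" "snd z"] that \<open>0 < \<epsilon>\<close> by auto
      then show ?thesis using low zero_le_power2[of R] unfolding \<psi>_def by linarith
    qed
  qed blast
  then obtain x0 t0 where t0: "0 \<le> t0" "t0 \<le> T" and z0: "z0 = (x0, t0)" by (auto simp: C_def)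
  have "0 < t0"
    using min[of "(x1, T)"] low init[of x0] t0 \<open>0 \<le> T\<close> by (cases "t0 = 0") (auto simp: z0 \<psi>_def)
  show False
  proof (rule qs_barrier_no_interior_min[OF \<open>0 < t0\<close> \<open>0 < \<epsilon>\<close> \<open>0 < t0\<close>])
    show "?\<phi> x0 t0 \<le> ?\<phi> x t0" for x
      using min[of "(x, t0)"] t0 by (simp add: z0 \<psi>_def)
    show "?\<phi> x0 t0 + \<epsilon> * t0 \<le> ?\<phi> x0 s + \<epsilon> * s" if "t0 - t0 < s" "s \<le> t0" for s
      using min[of "(x0, s)"] that t0 by (simp add: z0 \<psi>_def)
  qed
qed

end

theorem corollary8p5:
  fixes u0 :: "real^'n::finite \<Rightarrow> real^'m::finite"
    and U :: "(real^'n) \<times> real \<Rightarrow> real^'m"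
    and C_v C_H :: real
  assumes M0: "spacelike_entire_graph u0"
    and v_bd: "\<forall>x. vsq u0 x \<le> C_v"
    and H_bd: "\<exists>c < C_H. \<forall>x. nnorm2 (Hvec u0 x) \<le> c"
    and flow: "graphical_smcf U u0"
    and tame: "tame U C_H"
  shows "\<forall>(p::('n, 'm) pspace) (R::real). R > 0 \<longrightarrow> graph_at U 0 \<subseteq> qs_inside p R 0 \<longrightarrow>
           (\<forall>t\<ge>0. graph_at U t \<subseteq> qs_inside p R t)"
proof (intro allI impI)
  fix p :: "('n, 'm) pspace" and R T :: real
  assume init: "graph_at U 0 \<subseteq> qs_inside p R 0" and "0 \<le> T"
  obtain a b where p: "p = (a, b)" by fastforce
  obtain \<theta> where "\<theta> < 1" and lip: "\<And>x y. norm (u0 x - u0 y) \<le> \<theta> * norm (x - y)"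
    using spacelike_graph_lipschitz[OF M0] v_bd by metis
  obtain K where "0 \<le> K" and speed: "\<And>x s. 0 < s \<Longrightarrow> s \<le> T \<Longrightarrow> norm (time_deriv U (x, s)) \<le> K"
    using tame_speed_bound[OF flow tame] by metis
  have "norm (U (x, t) - u0 x) \<le> K * T" if "0 \<le> t" "t \<le> T" for x t
    using graphical_smcf_displacement[OF flow speed that] \<open>0 \<le> K\<close> that
    by (meson mult_left_mono order_trans)
  then show "graph_at U T \<subseteq> qs_inside p R T"
    using qs_barrier_preserved[OF flow \<open>\<theta> < 1\<close> lip] init \<open>0 \<le> T\<close>
    unfolding graph_at_subset_qs_inside_iff p by blast
qed

end
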